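(* Fix $e\in -\mathrm{int}(C)$ and let $A,B\in\mathcal P^0_{\mp C}(Y)$ be $\mp C$-compact sets. Then $(0,0)<_{\mathbb R^2_+}w_e(A,B)$ if and only if $A\prec^s B$.
   Context: $Y$ is a real topological linear space and $C\subset Y$ is a convex, closed, pointed cone with nonempty interior. $a<_{\mathbb R^2_+}b$ iff $b-a\in\mathrm{int}(\mathbb R^2_+)$. $\mathcal P^0_{\mp C}(Y)$ is the family of nonempty $A\subset Y$ with $A+C\neq Y$ and $A-C\neq Y$. $A$ is $C$-compact if every cover of $A$ by sets $U_\alpha+C$ with $U_\alpha$ open has a finite subcover; $\mp C$-compact means $C$-compact and $-C$-compact. $A\prec^s B$ iff $B\subset A+\mathrm{int}(C)$ and $A\subset B-\mathrm{int}(C)$. For $e\in-\mathrm{int}(C)$: $\phi_{e,A}(y)=\inf\{t\in\mathbb R: y\in te+A+C\}$; $G^\ell_e(A,B)=\sup_{b\in B}\phi_{e,A}(b)$; $G^u_e(B,A):=-G^\ell_e(-B,-A)$; $w_e(A,B)=\big(-G^\ell_e(A,B),\,G^u_e(B,A)\big)$. *)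

theory Defs
  imports "HOL-Analysis.Analysis"
begin

text \<open>Real topological linear space: real vector space with a topology making
  addition and negation continuous; joint continuity of scalar multiplication is
  imposed as a hypothesis of the theorem (see scaleR_cont).\<close>
class topological_real_vector = real_vector + topological_ab_group_add

definition scaleR_cont :: "'a::topological_real_vector itself \<Rightarrow> bool" where
  "scaleR_cont _ \<longleftrightarrow> continuous_on UNIV (\<lambda>p :: real \<times> 'a. fst p *\<^sub>R snd p)"

definition msum :: "'a::ab_group_add set \<Rightarrow> 'a set \<Rightarrow> 'a set" where
  "msum A B = {a + b | a b. a \<in> A \<and> b \<in> B}"

definition sneg :: "'a::ab_group_add set \<Rightarrow> 'a set" where
  "sneg A = uminus ` A"

definition pointed :: "'a::real_vector set \<Rightarrow> bool" where
  "pointed C \<longleftrightarrow> C \<inter> sneg C = {0}"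

definition proper_cone :: "'a::topological_real_vector set \<Rightarrow> bool" where
  "proper_cone C \<longleftrightarrow> cone C \<and> convex C \<and> closed C \<and> pointed C \<and> interior C \<noteq> {}"

definition P0 :: "'a::ab_group_add set \<Rightarrow> 'a set \<Rightarrow> bool" where
  "P0 C A \<longleftrightarrow> A \<noteq> {} \<and> msum A C \<noteq> UNIV \<and> msum A (sneg C) \<noteq> UNIV"

definition C_compact :: "'a::{ab_group_add,topological_space} set \<Rightarrow> 'a set \<Rightarrow> bool" where
  "C_compact C A \<longleftrightarrow>
     (\<forall>\<U>. (\<forall>U\<in>\<U>. open U) \<and> A \<subseteq> \<Union>((\<lambda>U. msum U C) ` \<U>) \<longrightarrow>
        (\<exists>\<F>\<subseteq>\<U>. finite \<F> \<and> A \<subseteq> \<Union>((\<lambda>U. msum U C) ` \<F>)))"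

definition mp_C_compact :: "'a::{ab_group_add,topological_space} set \<Rightarrow> 'a set \<Rightarrow> bool" where
  "mp_C_compact C A \<longleftrightarrow> C_compact C A \<and> C_compact (sneg C) A"

definition set_less_s :: "'a::{ab_group_add,topological_space} set \<Rightarrow> 'a set \<Rightarrow> 'a set \<Rightarrow> bool" where
  "set_less_s C A B \<longleftrightarrow> B \<subseteq> msum A (interior C) \<and> A \<subseteq> msum B (sneg (interior C))"

text \<open>Gerstewitz-type functional, valued in extended reals (inf of empty set = +\<infinity>).\<close>
definition phi :: "'a::real_vector set \<Rightarrow> 'a \<Rightarrow> 'a set \<Rightarrow> 'a \<Rightarrow> ereal" where
  "phi C e A y = Inf {ereal t | t. y \<in> msum {t *\<^sub>R e} (msum A C)}"

definition G_l :: "'a::real_vector set \<Rightarrow> 'a \<Rightarrow> 'a set \<Rightarrow> 'a set \<Rightarrow> ereal" where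
  "G_l C e A B = (SUP b\<in>B. phi C e A b)"

definition G_u :: "'a::real_vector set \<Rightarrow> 'a \<Rightarrow> 'a set \<Rightarrow> 'a set \<Rightarrow> ereal" where
  "G_u C e B A = - G_l C e (sneg B) (sneg A)"

definition w :: "'a::real_vector set \<Rightarrow> 'a \<Rightarrow> 'a set \<Rightarrow> 'a set \<Rightarrow> ereal \<times> ereal" where
  "w C e A B = (- G_l C e A B, G_u C e B A)"

text \<open>a <_{R^2_+} b iff b - a \<in> int(R^2_+), i.e. strict componentwise order.\<close>
definition lt_R2plus :: "ereal \<times> ereal \<Rightarrow> ereal \<times> ereal \<Rightarrow> bool" where
  "lt_R2plus a b \<longleftrightarrow> fst a < fst b \<and> snd a < snd b"

end

theory Submission
  imports Defs
begin

text \<open>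
  The first component of \<open>w\<^sub>e(A,B)\<close> is positive iff \<open>G\<^sup>\<ell>\<^sub>e(A,B) < 0\<close>, and this holds iff
  \<open>B \<subseteq> A + int C\<close>. If \<open>\<phi>\<^sub>e\<^sub>,\<^sub>A(b) < 0\<close> then \<open>b \<in> te + A + C\<close> with \<open>t < 0\<close>, and
  \<open>te \<in> int C\<close> absorbs the \<open>C\<close>-summand. Conversely, since \<open>int C\<close> is open, every point of
  \<open>A + int C\<close> already lies in one of the open sets \<open>-e/(n+1) + A + int C\<close>; \<open>C\<close>-compactness of
  \<open>B\<close> selects finitely many of them, which bounds \<open>\<phi>\<^sub>e\<^sub>,\<^sub>A\<close> on \<open>B\<close> uniformly by a negative number.
  The second component reduces to the first by negating all sets, which turns \<open>-C\<close>-compactness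
  of \<open>A\<close> into \<open>C\<close>-compactness of \<open>-A\<close>.
\<close>

lemma msum_iff: "y \<in> msum A B \<longleftrightarrow> (\<exists>a\<in>A. \<exists>b\<in>B. y = a + b)"
  unfolding msum_def by blast

lemma msumI: "a \<in> A \<Longrightarrow> b \<in> B \<Longrightarrow> a + b \<in> msum A B"
  unfolding msum_iff by blast

lemma subset_msum_zero: "0 \<in> B \<Longrightarrow> A \<subseteq> msum A B"
  using msumI[of _ A 0 B] by auto

lemma sneg_iff: "y \<in> sneg A \<longleftrightarrow> - y \<in> A"
  unfolding sneg_def by (auto simp: image_iff intro: bexI[where x="- y"])

lemma sneg_sneg [simp]: "sneg (sneg A) = A"
  by (auto simp: sneg_iff)

lemma sneg_msum: "sneg (msum A B) = msum (sneg A) (sneg B)"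
proof (intro equalityI subsetI)
  fix y assume "y \<in> sneg (msum A B)"
  then obtain a b where "a \<in> A" "b \<in> B" "- y = a + b"
    by (auto simp: sneg_iff msum_iff)
  then have "y = - (a + b)"
    by (metis minus_minus)
  then have "- a \<in> sneg A" "- b \<in> sneg B" "y = - a + - b"
    using \<open>a \<in> A\<close> \<open>b \<in> B\<close> by (simp_all add: sneg_iff)
  then show "y \<in> msum (sneg A) (sneg B)"
    unfolding msum_iff by blast
next
  fix y assume "y \<in> msum (sneg A) (sneg B)"
  then obtain a b where "- a \<in> A" "- b \<in> B" "y = a + b"
    by (auto simp: sneg_iff msum_iff)
  then have "- y = - a + - b"
    by simp
  with \<open>- a \<in> A\<close> \<open>- b \<in> B\<close> show "y \<in> sneg (msum A B)"
    unfolding sneg_iff msum_iff by blast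
qed

lemma sneg_UN: "sneg (\<Union>i\<in>I. S i) = (\<Union>i\<in>I. sneg (S i))"
  by (auto simp: sneg_iff)

lemma sneg_subset_iff: "sneg A \<subseteq> B \<longleftrightarrow> A \<subseteq> sneg B"
  by (metis sneg_sneg sneg_def image_mono)

lemma sneg_subset_msum_iff: "sneg A \<subseteq> msum (sneg B) S \<longleftrightarrow> A \<subseteq> msum B (sneg S)"
  by (simp add: sneg_subset_iff sneg_msum)

lemma open_sneg:
  fixes S :: "'a::topological_ab_group_add set"
  assumes "open S"
  shows "open (sneg S)"
proof -
  have "sneg S = uminus -` S"
    by (auto simp: sneg_iff)
  then show ?thesis
    using assms by (auto intro!: open_vimage continuous_intros)
qed

lemma open_msum:
  fixes U :: "'a::topological_ab_group_add set"
  assumes "open U"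
  shows "open (msum A U)"
proof -
  have "msum A U = (\<Union>a\<in>A. (\<lambda>x. x - a) -` U)"
  proof (intro equalityI subsetI)
    fix x assume "x \<in> msum A U"
    then obtain a b where "a \<in> A" "b \<in> U" "x = a + b"
      by (auto simp: msum_iff)
    then show "x \<in> (\<Union>a\<in>A. (\<lambda>x. x - a) -` U)"
      by (intro UN_I[of a]) simp_all
  next
    fix x assume "x \<in> (\<Union>a\<in>A. (\<lambda>x. x - a) -` U)"
    then obtain a where "a \<in> A" "x - a \<in> U"
      by blast
    then show "x \<in> msum A U"
      using msumI[of a A "x - a" U] by simp
  qed
  then show ?thesis
    using assms by (auto intro!: open_vimage continuous_intros)
qed

lemma C_compactD:
  assumes "C_compact C A" "\<forall>U\<in>\<U>. open U" "A \<subseteq> (\<Union>U\<in>\<U>. msum U C)"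
  obtains \<F> where "\<F> \<subseteq> \<U>" "finite \<F>" "A \<subseteq> (\<Union>U\<in>\<F>. msum U C)"
  using assms unfolding C_compact_def by meson

lemma C_compact_sneg:
  fixes C :: "'a::topological_ab_group_add set"
  assumes "C_compact (sneg C) A"
  shows "C_compact C (sneg A)"
  unfolding C_compact_def
proof (intro allI impI, elim conjE)
  fix \<U> :: "'a set set"
  assume open_\<U>: "\<forall>U\<in>\<U>. open U" and cover: "sneg A \<subseteq> (\<Union>U\<in>\<U>. msum U C)"
  have "A \<subseteq> sneg (\<Union>U\<in>\<U>. msum U C)"
    using cover by (simp only: sneg_subset_iff[symmetric])
  then have cover': "A \<subseteq> (\<Union>V\<in>sneg ` \<U>. msum V (sneg C))"
    by (simp add: sneg_UN sneg_msum)
  have open': "\<forall>V\<in>sneg ` \<U>. open V"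
    using open_\<U> by (auto intro: open_sneg)
  obtain \<F>' where "\<F>' \<subseteq> sneg ` \<U>" "finite \<F>'" and \<F>': "A \<subseteq> (\<Union>V\<in>\<F>'. msum V (sneg C))"
    by (rule C_compactD[OF assms open' cover'])
  then obtain \<F> where "\<F> \<subseteq> \<U>" "finite \<F>" "\<F>' = sneg ` \<F>"
    by (meson finite_subset_image)
  have "sneg A \<subseteq> sneg (\<Union>V\<in>\<F>'. msum V (sneg C))"
    using \<F>' by (simp add: sneg_subset_iff)
  also have "\<dots> = (\<Union>U\<in>\<F>. msum U C)"
    using \<open>\<F>' = sneg ` \<F>\<close> by (simp add: sneg_UN sneg_msum)
  finally show "\<exists>\<F>\<subseteq>\<U>. finite \<F> \<and> sneg A \<subseteq> (\<Union>U\<in>\<F>. msum U C)"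
    using \<open>\<F> \<subseteq> \<U>\<close> \<open>finite \<F>\<close> by blast
qed

lemma C_compact_indexed_finite_subcover:
  assumes "C_compact C Y" "\<And>n. open (U n)" "Y \<subseteq> (\<Union>n. msum (U n) C)"
  obtains I where "finite I" "Y \<subseteq> (\<Union>n\<in>I. msum (U n) C)"
proof -
  have "\<forall>V\<in>range U. open V" "Y \<subseteq> (\<Union>V\<in>range U. msum V C)"
    using assms(2,3) by auto
  then obtain \<F> where \<F>: "\<F> \<subseteq> range U" "finite \<F>" "Y \<subseteq> (\<Union>V\<in>\<F>. msum V C)"
    by (rule C_compactD[OF assms(1)])
  then obtain I where "\<F> = U ` I" "finite I"
    by (meson finite_subset_image)
  with \<F>(3) show ?thesis
    by (intro that) auto
qed

lemma scaleR_cont_continuous_on_scaleR_right: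
  assumes "scaleR_cont TYPE('a::topological_real_vector)"
  shows "continuous_on UNIV (\<lambda>x::'a. s *\<^sub>R x)"
  using continuous_on_compose2[OF assms[unfolded scaleR_cont_def], of UNIV "\<lambda>x. (s, x)"]
  by (simp add: continuous_intros)

lemma scaleR_cont_continuous_on_scaleR_left:
  assumes "scaleR_cont TYPE('a::topological_real_vector)"
  shows "continuous_on UNIV (\<lambda>s::real. s *\<^sub>R (v::'a))"
  using continuous_on_compose2[OF assms[unfolded scaleR_cont_def], of UNIV "\<lambda>s. (s, v)"]
  by (simp add: continuous_intros)

lemma open_add_inverse_Suc_scaleR:
  fixes S :: "'a::topological_real_vector set"
  assumes "scaleR_cont TYPE('a)" "open S" "x \<in> S"
  obtains n where "x + (1 / real (Suc n)) *\<^sub>R v \<in> S"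
proof -
  have "open ((\<lambda>s::real. x + s *\<^sub>R v) -` S)"
    using assms(1,2) scaleR_cont_continuous_on_scaleR_left
    by (auto intro!: open_vimage continuous_intros)
  moreover have "0 \<in> (\<lambda>s::real. x + s *\<^sub>R v) -` S"
    using assms(3) by simp
  ultimately obtain d where "d > 0" and d: "ball 0 d \<subseteq> (\<lambda>s::real. x + s *\<^sub>R v) -` S"
    using open_contains_ball by blast
  obtain n where "inverse (real (Suc n)) < d"
    using reals_Archimedean \<open>d > 0\<close> by blast
  then have "1 / real (Suc n) \<in> ball 0 d"
    by (simp add: dist_real_def divide_inverse)
  then have "x + (1 / real (Suc n)) *\<^sub>R v \<in> S"
    using d by blast
  then show ?thesis
    by (rule that)
qed

lemma interior_cone_scaleR:
  fixes C :: "'a::topological_real_vector set"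
  assumes "scaleR_cont TYPE('a)" "cone C" "s > 0" "x \<in> interior C"
  shows "s *\<^sub>R x \<in> interior C"
proof -
  have "(\<lambda>y. (1 / s) *\<^sub>R y) -` interior C \<subseteq> C"
  proof
    fix y assume "y \<in> (\<lambda>y. (1 / s) *\<^sub>R y) -` interior C"
    then have "(1 / s) *\<^sub>R y \<in> C"
      using interior_subset by blast
    moreover have "y = s *\<^sub>R ((1 / s) *\<^sub>R y)"
      using \<open>s > 0\<close> by simp
    ultimately show "y \<in> C"
      using assms(2) \<open>s > 0\<close> unfolding cone_def by (metis less_imp_le)
  qed
  moreover have "open ((\<lambda>y. (1 / s) *\<^sub>R y) -` interior C)"
    using assms(1) scaleR_cont_continuous_on_scaleR_right by (blast intro: open_vimage)
  moreover have "s *\<^sub>R x \<in> (\<lambda>y. (1 / s) *\<^sub>R y) -` interior C"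
    using assms(3,4) by simp
  ultimately show ?thesis
    using interior_maximal by blast
qed

lemma interior_convex_cone_add:
  fixes C :: "'a::topological_real_vector set"
  assumes "cone C" "convex C" "x \<in> interior C" "c \<in> C"
  shows "x + c \<in> interior C"
proof -
  have "(\<lambda>y. y - c) -` interior C \<subseteq> C"
  proof
    fix y assume "y \<in> (\<lambda>y. y - c) -` interior C"
    then have "y - c \<in> C"
      using interior_subset by blast
    then have "(y - c) + c \<in> C"
      using assms(1,2,4) convex_cone by blast
    then show "y \<in> C"
      by simp
  qed
  moreover have "open ((\<lambda>y. y - c) -` interior C)"
    by (auto intro!: open_vimage continuous_intros)
  moreover have "x + c \<in> (\<lambda>y. y - c) -` interior C"
    using assms(3) by simp
  ultimately show ?thesis
    using interior_maximal by blast
qed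

lemma msum_open_subset_UN_shift:
  fixes S :: "'a::topological_real_vector set"
  assumes "scaleR_cont TYPE('a)" "open S"
  shows "msum X S \<subseteq> (\<Union>n. msum {(- (1 / real (Suc n))) *\<^sub>R v} (msum X S))"
proof
  fix y assume "y \<in> msum X S"
  then obtain a x where a: "a \<in> X" and "x \<in> S" "y = a + x"
    unfolding msum_iff by blast
  obtain n where x: "x + (1 / real (Suc n)) *\<^sub>R v \<in> S"
    by (rule open_add_inverse_Suc_scaleR[OF assms \<open>x \<in> S\<close>])
  have "y = (- (1 / real (Suc n))) *\<^sub>R v + (a + (x + (1 / real (Suc n)) *\<^sub>R v))"
    using \<open>y = a + x\<close> by (simp add: algebra_simps)
  also have "\<dots> \<in> msum {(- (1 / real (Suc n))) *\<^sub>R v} (msum X S)"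
    by (intro msumI singletonI a x)
  finally show "y \<in> (\<Union>n. msum {(- (1 / real (Suc n))) *\<^sub>R v} (msum X S))"
    by blast
qed

lemma msum_interior_add_cone_subset:
  fixes C :: "'a::topological_real_vector set"
  assumes "cone C" "convex C"
  shows "msum (msum {p} (msum X (interior C))) C \<subseteq> msum {p} (msum X C)"
proof
  fix y assume "y \<in> msum (msum {p} (msum X (interior C))) C"
  then obtain a x c where "a \<in> X" "x \<in> interior C" "c \<in> C" and y: "y = p + (a + (x + c))"
    by (auto simp: msum_iff add.assoc)
  have "x + c \<in> C"
    using interior_convex_cone_add[OF assms \<open>x \<in> interior C\<close> \<open>c \<in> C\<close>] interior_subset by blast
  then show "y \<in> msum {p} (msum X C)"
    unfolding y by (intro msumI singletonI \<open>a \<in> X\<close>)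
qed

lemma phi_less_iff:
  "phi C e X y < ereal r \<longleftrightarrow> (\<exists>t<r. y \<in> msum {t *\<^sub>R e} (msum X C))"
  unfolding phi_def by (auto simp: Inf_less_iff)

lemma phi_le:
  assumes "y \<in> msum {t *\<^sub>R e} (msum X C)"
  shows "phi C e X y \<le> ereal t"
  unfolding phi_def using assms by (auto intro!: Inf_lower)

lemma G_l_negative_imp_subset:
  fixes C :: "'a::topological_real_vector set"
  assumes "scaleR_cont TYPE('a)" "cone C" "convex C" "e \<in> sneg (interior C)"
    and "G_l C e X Y < 0"
  shows "Y \<subseteq> msum X (interior C)"
proof
  fix y assume "y \<in> Y"
  then have "phi C e X y < ereal 0"
    using assms(5) unfolding G_l_def zero_ereal_def by (blast intro: SUP_upper order_le_less_trans)
  then obtain t where "t < 0" "y \<in> msum {t *\<^sub>R e} (msum X C)"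
    unfolding phi_less_iff by blast
  then obtain a c where "a \<in> X" "c \<in> C" "y = a + (t *\<^sub>R e + c)"
    by (auto simp: msum_iff add.left_commute)
  moreover have "t *\<^sub>R e \<in> interior C"
    using interior_cone_scaleR[OF assms(1,2), of "- t" "- e"] assms(4) \<open>t < 0\<close>
    by (simp add: sneg_iff)
  ultimately show "y \<in> msum X (interior C)"
    using interior_convex_cone_add[OF assms(2,3)] unfolding msum_iff by blast
qed

lemma C_compact_phi_uniformly_negative:
  fixes C :: "'a::topological_real_vector set"
  assumes "scaleR_cont TYPE('a)" "cone C" "convex C" "e \<in> sneg (interior C)"
    and "C_compact C Y" "Y \<subseteq> msum X (interior C)"
  obtains r where "r < 0" "\<And>y. y \<in> Y \<Longrightarrow> phi C e X y \<le> ereal r"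
proof -
  define U where "U n = msum {(- (1 / real (Suc n))) *\<^sub>R e} (msum X (interior C))" for n
  have "0 \<in> C"
    using assms(2,4) cone_contains_0 interior_subset by (auto simp: sneg_iff)
  have "Y \<subseteq> (\<Union>n. U n)"
    using assms(6) msum_open_subset_UN_shift[OF assms(1) open_interior] unfolding U_def by blast
  also have "\<dots> \<subseteq> (\<Union>n. msum (U n) C)"
    using subset_msum_zero[OF \<open>0 \<in> C\<close>] by blast
  finally obtain I where "finite I" and I: "Y \<subseteq> (\<Union>n\<in>I. msum (U n) C)"
    using C_compact_indexed_finite_subcover[OF assms(5)] open_msum[OF open_msum[OF open_interior]]
    unfolding U_def by metis
  have "phi C e X y \<le> ereal (- (1 / real (Suc (Max I))))" if "y \<in> Y" for y
  proof -
    obtain n where "n \<in> I" "y \<in> msum (U n) C"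
      using I \<open>y \<in> Y\<close> by blast
    then have "phi C e X y \<le> ereal (- (1 / real (Suc n)))"
      using msum_interior_add_cone_subset[OF assms(2,3)] unfolding U_def by (blast intro: phi_le)
    also have "\<dots> \<le> ereal (- (1 / real (Suc (Max I))))"
      using \<open>finite I\<close> \<open>n \<in> I\<close> by (simp add: frac_le)
    finally show ?thesis .
  qed
  moreover have "- (1 / real (Suc (Max I))) < 0"
    by simp
  ultimately show ?thesis
    using that by blast
qed
lemma G_l_negative_iff:
  fixes C :: "'a::topological_real_vector set"
  assumes "scaleR_cont TYPE('a)" "cone C" "convex C" "e \<in> sneg (interior C)" "C_compact C Y"
  shows "G_l C e X Y < 0 \<longleftrightarrow> Y \<subseteq> msum X (interior C)"
proof
  assume "Y \<subseteq> msum X (interior C)"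
  then obtain r where "r < 0" "\<And>y. y \<in> Y \<Longrightarrow> phi C e X y \<le> ereal r"
    using C_compact_phi_uniformly_negative[OF assms] by blast
  then have "G_l C e X Y \<le> ereal r"
    unfolding G_l_def by (blast intro: SUP_least)
  then show "G_l C e X Y < 0"
    using \<open>r < 0\<close> by (simp add: le_less_trans)
qed (rule G_l_negative_imp_subset[OF assms(1-4)])

theorem theorem4:
  fixes C :: "'a::topological_real_vector set" and e :: 'a and A B :: "'a set"
  assumes "scaleR_cont TYPE('a)"
    and "proper_cone C"
    and "e \<in> sneg (interior C)"
    and "P0 C A" and "P0 C B"
    and "mp_C_compact C A" and "mp_C_compact C B"
  shows "lt_R2plus (0, 0) (w C e A B) \<longleftrightarrow> set_less_s C A B"
proof -
  have cone: "cone C" "convex C"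
    using assms(2) unfolding proper_cone_def by auto
  have "C_compact C B" "C_compact C (sneg A)"
    using assms(6,7) C_compact_sneg unfolding mp_C_compact_def by auto
  then have "G_l C e A B < 0 \<longleftrightarrow> B \<subseteq> msum A (interior C)"
    and "G_l C e (sneg B) (sneg A) < 0 \<longleftrightarrow> A \<subseteq> msum B (sneg (interior C))"
    by (simp_all add: G_l_negative_iff[OF assms(1) cone assms(3)] sneg_subset_msum_iff)
  moreover have "lt_R2plus (0, 0) (w C e A B) \<longleftrightarrow>
      G_l C e A B < 0 \<and> G_l C e (sneg B) (sneg A) < 0"
    unfolding lt_R2plus_def w_def G_u_def by (simp add: ereal_uminus_less_reorder)
  ultimately show ?thesis
    unfolding set_less_s_def by blast
qed

end
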